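(* Let $q$ be a power of an odd prime, let $t\in\mathbb{F}_q$ be a nonsquare, and let $d\ge 2$. Let $Q=\{(x,y,tx^2-y^2): x,y\in\mathbb{F}_q\}\subset\mathbb{F}_q^3$ and $R=\{(x,tx^2): x\in\mathbb{F}_q\}\subset\mathbb{F}_q^2$. Define $P_d\subset\mathbb{F}_q^d$ by: $P_d=Q^{d/3}$ (the Cartesian product of $d/3$ copies of $Q$) if $d\equiv0\pmod 3$; $P_d=Q^{(d-1)/3}\times\{0\}$ if $d\equiv1\pmod 3$; $P_d=Q^{(d-2)/3}\times R$ if $d\equiv 2\pmod 3$. Then $|P_d|=q^{\lfloor 2d/3\rfloor}$ and no line in $\mathbb{F}_q^d$ contains more than two points of $P_d$.
   Context: A line in $\mathbb{F}_q^d$ is a set $\{u+rv: r\in\mathbb{F}_q\}$ with $u,v\in\mathbb{F}_q^d$, $v\ne 0$. A nonsquare is an element of $\mathbb{F}_q$ that is not of the form $s^2$ with $s\in\mathbb{F}_q$. *)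

theory Defs
  imports "HOL-Computational_Algebra.Primes" "HOL-Library.Cardinality"
begin

definition cart :: "'a list set \<Rightarrow> 'a list set \<Rightarrow> 'a list set" where
  "cart A B = {u @ v | u v. u \<in> A \<and> v \<in> B}"

definition Qset :: "'a::field \<Rightarrow> 'a list set" where
  "Qset t = {[x, y, t * x^2 - y^2] | x y. True}"

definition Rset :: "'a::field \<Rightarrow> 'a list set" where
  "Rset t = {[x, t * x^2] | x. True}"

fun Qpow :: "'a::field \<Rightarrow> nat \<Rightarrow> 'a list set" where
  "Qpow t 0 = {[]}"
| "Qpow t (Suc k) = cart (Qpow t k) (Qset t)"

definition Pset :: "'a::field \<Rightarrow> nat \<Rightarrow> 'a list set" where
  "Pset t d =
     (if d mod 3 = 0 then Qpow t (d div 3)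
      else if d mod 3 = 1 then cart (Qpow t (d div 3)) {[0]}
      else cart (Qpow t (d div 3)) (Rset t))"

definition line :: "'a::field list \<Rightarrow> 'a list \<Rightarrow> 'a list set" where
  "line u v = {map2 (\<lambda>a b. a + r * b) u v | r. True}"

end

theory Submission
  imports Defs
begin

text \<open>
  Along a line \<open>r \<mapsto> u + r v\<close> the defining equation of \<open>Q\<close> (resp. \<open>R\<close>) becomes a polynomial
  identity of degree at most two in \<open>r\<close>, with leading coefficient \<open>t b\<^sup>2 - e\<^sup>2\<close> (resp. \<open>t b\<^sup>2\<close>),
  where \<open>b, e\<close> are the first two coordinates of \<open>v\<close>. Three points on the line force all
  coefficients to vanish; since \<open>t\<close> is a nonsquare this gives \<open>b = e = 0\<close> and then \<open>v = 0\<close>.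
  Having no three collinear points is preserved by Cartesian products, as a line in a
  product projects to a line (or a point) in each factor, and \<open>P\<^sub>d\<close> is such a product.
  The cardinality is immediate since \<open>Q\<close> and \<open>R\<close> are graphs over \<open>F\<^sub>q\<^sup>2\<close> and \<open>F\<^sub>q\<close>.
\<close>

definition line_point :: "'a::field list \<Rightarrow> 'a list \<Rightarrow> 'a \<Rightarrow> 'a list" where
  "line_point u v r = map2 (\<lambda>a b. a + r * b) u v"

lemma line_point_Nil [simp]: "line_point [] v r = []"
  by (simp add: line_point_def)

lemma line_point_Cons [simp]:
  "line_point (a # u) (b # v) r = (a + r * b) # line_point u v r"
  by (simp add: line_point_def)

lemma line_eq_range_line_point: "line u v = range (line_point u v)"
  by (auto simp: line_def line_point_def)

definition no_three_collinear :: "'a::field list set \<Rightarrow> bool" where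
  "no_three_collinear S \<longleftrightarrow>
     (\<forall>u v r1 r2 r3. length u = length v \<longrightarrow> distinct [r1, r2, r3] \<longrightarrow>
        line_point u v r1 \<in> S \<longrightarrow> line_point u v r2 \<in> S \<longrightarrow> line_point u v r3 \<in> S \<longrightarrow>
        set v \<subseteq> {0})"

lemma no_three_collinearI:
  assumes "\<And>u v r1 r2 r3. \<lbrakk>length u = length v; distinct [r1, r2, r3];
      line_point u v r1 \<in> S; line_point u v r2 \<in> S; line_point u v r3 \<in> S\<rbrakk> \<Longrightarrow> set v \<subseteq> {0}"
  shows "no_three_collinear S"
  using assms unfolding no_three_collinear_def by blast

lemma no_three_collinearD:
  assumes "no_three_collinear S" "length u = length v" "distinct [r1, r2, r3]"
    "line_point u v r1 \<in> S" "line_point u v r2 \<in> S" "line_point u v r3 \<in> S"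
  shows "set v \<subseteq> {0}"
  using assms unfolding no_three_collinear_def by blast

lemma card_line_inter_le_2:
  assumes S: "no_three_collinear S" and len: "length u = length v"
    and v: "v \<noteq> replicate (length v) 0"
  shows "card (line u v \<inter> S) \<le> 2"
proof (rule ccontr)
  assume "\<not> card (line u v \<inter> S) \<le> 2"
  then have "3 \<le> card (line u v \<inter> S)" by simp
  then obtain T where T: "T \<subseteq> line u v \<inter> S" "card T = 3"
    by (rule obtain_subset_with_card_n)
  then obtain x y z where xyz: "T = {x, y, z}" "x \<noteq> y" "x \<noteq> z" "y \<noteq> z"
    unfolding card_3_iff by blast
  have "x \<in> line u v" "y \<in> line u v" "z \<in> line u v"
    using T xyz by auto
  then obtain r1 r2 r3 where
    r: "x = line_point u v r1" "y = line_point u v r2" "z = line_point u v r3"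
    unfolding line_eq_range_line_point by blast
  have "x \<in> S" "y \<in> S" "z \<in> S"
    using T xyz by auto
  moreover have "distinct [r1, r2, r3]"
    using xyz r by auto
  ultimately have "set v \<subseteq> {0}"
    using no_three_collinearD[OF S len] r by blast
  then have "v = replicate (length v) 0"
    by (intro replicate_eqI) auto
  with v show False by contradiction
qed

lemma line_point_eq_imp_direction_zero:
  assumes "length u = length v" "line_point u v r1 = line_point u v r2" "r1 \<noteq> r2"
  shows "set v \<subseteq> {0}"
  using assms by (induction u v rule: list_induct2) auto

lemma no_three_collinear_singleton: "no_three_collinear {w}"
proof (rule no_three_collinearI)
  fix u v :: "'a list" and r1 r2 r3
  assume "length u = length v" "distinct [r1, r2, r3]"
    "line_point u v r1 \<in> {w}" "line_point u v r2 \<in> {w}"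
  then show "set v \<subseteq> {0}"
    by (intro line_point_eq_imp_direction_zero[of u v r1 r2]) auto
qed

lemma no_three_collinear_cart:
  assumes A: "no_three_collinear A" and B: "no_three_collinear B"
    and lenA: "\<And>w. w \<in> A \<Longrightarrow> length w = n"
  shows "no_three_collinear (cart A B)"
proof (rule no_three_collinearI)
  fix u v :: "'a list" and r1 r2 r3
  assume len: "length u = length v" and r: "distinct [r1, r2, r3]"
    and p: "line_point u v r1 \<in> cart A B" "line_point u v r2 \<in> cart A B"
      "line_point u v r3 \<in> cart A B"
  have split: "line_point (take n u) (take n v) r \<in> A \<and> line_point (drop n u) (drop n v) r \<in> B"
    if "line_point u v r \<in> cart A B" for r
  proof -
    from that obtain w1 w2 where w: "line_point u v r = w1 @ w2" "w1 \<in> A" "w2 \<in> B"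
      by (auto simp: cart_def)
    have "take n (line_point u v r) = line_point (take n u) (take n v) r"
      "drop n (line_point u v r) = line_point (drop n u) (drop n v) r"
      by (simp_all add: line_point_def take_map take_zip drop_map drop_zip)
    with w lenA show ?thesis by auto
  qed
  have "set (take n v) \<subseteq> {0}"
    using split[OF p(1)] split[OF p(2)] split[OF p(3)] len
    by (intro no_three_collinearD[OF A _ r]) auto
  moreover have "set (drop n v) \<subseteq> {0}"
    using split[OF p(1)] split[OF p(2)] split[OF p(3)] len
    by (intro no_three_collinearD[OF B _ r]) auto
  ultimately show "set v \<subseteq> {0}"
    by (metis append_take_drop_id set_append Un_subset_iff)
qed

lemma quadratic_three_roots:
  fixes A B C r1 r2 r3 :: "'a::field"
  assumes "distinct [r1, r2, r3]"
    and "A * r1^2 + B * r1 + C = 0" "A * r2^2 + B * r2 + C = 0" "A * r3^2 + B * r3 + C = 0"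
  shows "A = 0 \<and> B = 0"
proof -
  have "(r1 - r2) * (A * (r1 + r2) + B) = (A * r1^2 + B * r1 + C) - (A * r2^2 + B * r2 + C)"
    "(r1 - r3) * (A * (r1 + r3) + B) = (A * r1^2 + B * r1 + C) - (A * r3^2 + B * r3 + C)"
    by (simp_all add: algebra_simps power2_eq_square)
  then have "(r1 - r2) * (A * (r1 + r2) + B) = 0" "(r1 - r3) * (A * (r1 + r3) + B) = 0"
    using assms(2-4) by simp_all
  with assms(1) have e12: "A * (r1 + r2) + B = 0" and e13: "A * (r1 + r3) + B = 0"
    by auto
  have "A * (r2 - r3) = (A * (r1 + r2) + B) - (A * (r1 + r3) + B)"
    by (simp add: algebra_simps)
  with e12 e13 have "A * (r2 - r3) = 0" by simp
  with assms(1) have "A = 0" by simp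
  with e12 show ?thesis by simp
qed

lemma nonsquare_anisotropic:
  fixes t b e :: "'a::field"
  assumes t: "\<not> (\<exists>s. t = s^2)" and "t * b^2 = e^2"
  shows "b = 0 \<and> e = 0"
proof -
  have "b = 0"
  proof (rule ccontr)
    assume "b \<noteq> 0"
    with assms(2) have "t = (e / b)^2" by (simp add: power_divide field_simps)
    with t show False by blast
  qed
  with assms(2) show ?thesis by simp
qed

lemma no_three_collinear_Qset:
  assumes t: "\<not> (\<exists>s. t = s^2)"
  shows "no_three_collinear (Qset (t::'a::field))"
proof (rule no_three_collinearI)
  fix u v :: "'a list" and r1 r2 r3
  assume len: "length u = length v" and r: "distinct [r1, r2, r3]"
    and p: "line_point u v r1 \<in> Qset t" "line_point u v r2 \<in> Qset t"
      "line_point u v r3 \<in> Qset t"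
  have "length (line_point u v r1) = 3"
    using p(1) by (auto simp: Qset_def)
  with len have "length u = 3" "length v = 3"
    by (simp_all add: line_point_def)
  then obtain a c f b e g where uv: "u = [a, c, f]" "v = [b, e, g]"
    by (fastforce simp: numeral_3_eq_3 length_Suc_conv)
  have quadratic: "(t * b^2 - e^2) * r^2 + (2 * t * a * b - 2 * c * e - g) * r
      + (t * a^2 - c^2 - f) = 0"
    if "line_point u v r \<in> Qset t" for r
  proof -
    from that have "f + r * g = t * (a + r * b)^2 - (c + r * e)^2"
      by (auto simp: uv Qset_def)
    then show ?thesis by algebra
  qed
  from quadratic_three_roots[OF r quadratic[OF p(1)] quadratic[OF p(2)] quadratic[OF p(3)]]
  have "t * b^2 = e^2" and g: "2 * t * a * b - 2 * c * e - g = 0" by simp_all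
  with nonsquare_anisotropic[OF t] have "b = 0" "e = 0" by simp_all
  with g show "set v \<subseteq> {0}"
    by (simp add: uv)
qed

lemma no_three_collinear_Rset:
  assumes t: "\<not> (\<exists>s. t = s^2)"
  shows "no_three_collinear (Rset (t::'a::field))"
proof (rule no_three_collinearI)
  fix u v :: "'a list" and r1 r2 r3
  assume len: "length u = length v" and r: "distinct [r1, r2, r3]"
    and p: "line_point u v r1 \<in> Rset t" "line_point u v r2 \<in> Rset t"
      "line_point u v r3 \<in> Rset t"
  have "length (line_point u v r1) = 2"
    using p(1) by (auto simp: Rset_def)
  with len have "length u = 2" "length v = 2"
    by (simp_all add: line_point_def)
  then obtain a f b g where uv: "u = [a, f]" "v = [b, g]"
    by (fastforce simp: numeral_2_eq_2 length_Suc_conv)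
  have quadratic: "(t * b^2) * r^2 + (2 * t * a * b - g) * r + (t * a^2 - f) = 0"
    if "line_point u v r \<in> Rset t" for r
  proof -
    from that have "f + r * g = t * (a + r * b)^2"
      by (auto simp: uv Rset_def)
    then show ?thesis by algebra
  qed
  from quadratic_three_roots[OF r quadratic[OF p(1)] quadratic[OF p(2)] quadratic[OF p(3)]]
  have b: "t * b^2 = 0^2" and g: "2 * t * a * b - g = 0" by simp_all
  from nonsquare_anisotropic[OF t b] have "b = 0" by simp
  with g show "set v \<subseteq> {0}"
    by (simp add: uv)
qed

lemma length_Qpow: "w \<in> Qpow t k \<Longrightarrow> length w = 3 * k"
  by (induction k arbitrary: w) (auto simp: cart_def Qset_def)

lemma no_three_collinear_Qpow:
  assumes "\<not> (\<exists>s. t = s^2)"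
  shows "no_three_collinear (Qpow (t::'a::field) k)"
proof (induction k)
  case 0
  show ?case by (simp add: no_three_collinear_singleton)
next
  case (Suc k)
  show ?case
    using no_three_collinear_cart[OF Suc.IH no_three_collinear_Qset[OF assms] length_Qpow]
    by simp
qed

lemma no_three_collinear_Pset:
  assumes "\<not> (\<exists>s. t = s^2)"
  shows "no_three_collinear (Pset (t::'a::field) d)"
  using no_three_collinear_Qpow[OF assms]
    no_three_collinear_cart[OF no_three_collinear_Qpow[OF assms] no_three_collinear_singleton
      length_Qpow]
    no_three_collinear_cart[OF no_three_collinear_Qpow[OF assms] no_three_collinear_Rset[OF assms]
      length_Qpow]
  by (simp add: Pset_def)

lemma cart_eq_image: "cart A B = (\<lambda>(x, y). x @ y) ` (A \<times> B)"
  by (auto simp: cart_def)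

lemma card_cart:
  assumes "\<And>w. w \<in> A \<Longrightarrow> length w = n"
  shows "card (cart A B) = card A * card B"
proof -
  have "inj_on (\<lambda>(x, y). x @ y) (A \<times> B)"
    using assms by (auto simp: inj_on_def)
  then show ?thesis
    by (simp add: cart_eq_image card_image card_cartesian_product)
qed

lemma card_Qset: "card (Qset (t::'a::{field,finite})) = CARD('a)^2"
proof -
  have "Qset t = (\<lambda>(x, y). [x, y, t * x^2 - y^2]) ` (UNIV \<times> UNIV)"
    by (auto simp: Qset_def)
  moreover have "inj_on (\<lambda>(x, y). [x, y, t * x^2 - y^2]) (UNIV \<times> UNIV)"
    by (auto simp: inj_on_def)
  ultimately show ?thesis
    by (simp add: card_image card_cartesian_product power2_eq_square)
qed

lemma card_Rset: "card (Rset (t::'a::{field,finite})) = CARD('a)"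
proof -
  have "Rset t = (\<lambda>x. [x, t * x^2]) ` UNIV"
    by (auto simp: Rset_def)
  moreover have "inj (\<lambda>x. [x, t * x^2])"
    by (auto simp: inj_on_def)
  ultimately show ?thesis
    by (simp add: card_image)
qed

lemma card_cart_Qpow: "card (cart (Qpow t k) B) = card (Qpow t k) * card B"
  by (rule card_cart) (rule length_Qpow)

lemma card_Qpow: "card (Qpow (t::'a::{field,finite}) k) = CARD('a)^(2 * k)"
proof (induction k)
  case 0
  show ?case by simp
next
  case (Suc k)
  have "card (Qpow t (Suc k)) = CARD('a)^(2 * k) * CARD('a)^2"
    by (simp add: card_cart_Qpow Suc.IH card_Qset)
  then show ?case
    by (simp add: power_add power2_eq_square flip: power_mult)
qed

lemma card_Pset: "card (Pset (t::'a::{field,finite}) d) = CARD('a)^(2 * d div 3)"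
proof -
  consider "d mod 3 = 0" | "d mod 3 = 1" | "d mod 3 = 2" by linarith
  then show ?thesis
  proof cases
    case 1
    then have "2 * d div 3 = 2 * (d div 3)" by presburger
    with 1 show ?thesis by (simp add: Pset_def card_Qpow)
  next
    case 2
    then have "2 * d div 3 = 2 * (d div 3)" by presburger
    with 2 show ?thesis by (simp add: Pset_def card_cart_Qpow card_Qpow)
  next
    case 3
    then have "2 * d div 3 = 2 * (d div 3) + 1" by presburger
    with 3 show ?thesis
      by (simp add: Pset_def card_cart_Qpow card_Qpow card_Rset)
  qed
qed

theorem mainTheorem13:
  fixes t :: "'a::{field, finite}" and d :: nat
  assumes "\<exists>p k. prime p \<and> odd p \<and> k \<ge> 1 \<and> CARD('a) = p ^ k"
    and "\<not> (\<exists>s. t = s^2)"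
    and "d \<ge> 2"
  shows "card (Pset t d) = CARD('a) ^ (2 * d div 3) \<and>
         (\<forall>u v. length u = d \<and> length v = d \<and> v \<noteq> replicate d 0 \<longrightarrow>
                card (line u v \<inter> Pset t d) \<le> 2)"
  using card_Pset card_line_inter_le_2[OF no_three_collinear_Pset[OF assms(2)]] by auto

end
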